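(* Let $(X,\sim)$, $U$ and $\tau$ satisfy (C1), (C1'), (C2), and let $\mathcal M(U,\tau)=(X,(U_x)_{x\in X})$ be as constructed below. Then $\mathcal M(U,\tau)$ always satisfies (LM0), (LM1), (LM1'), and the following are equivalent: (i) $\mathcal M(U,\tau)$ is a local Moufang set; (ii) $h_x^{-1}Uh_x=U$ for all units $x\in X$; (iii) $U^\tau=U^{\mu_x}$ for all units $x\in X$.
   Context: Group actions are right actions; $g^h=h^{-1}gh$; permutations are composed left to right. For a set $X$ with equivalence relation $\sim$, $\overline x$ is the class of $x$, $\overline X$ the set of classes, $\mathrm{Sym}(X,\sim)$ the group of bijections $g$ with $x\sim y\iff xg\sim yg$, and for $U\le\mathrm{Sym}(X,\sim)$, $\overline U$ is the induced permutation group of $\overline X$. A local Moufang set is $(X,\sim)$ with $|\overline X|>2$ and subgroups $U_x\le\mathrm{Sym}(X,\sim)$ ($x\in X$) with: (LM0) $x\sim y\Rightarrow\overline{U_x}=\overline{U_y}$; (LM1) $U_x$ fixes $x$ and is sharply transitive on $X\setminus\overline x$; (LM1') $\overline{U_x}$ fixes $\overline x$ and is sharply transitive on $\overline X\setminus\{\overline x\}$; (LM2) $U_x^g=U_{xg}$ for all $x$ and all $g\in\langle U_y\mid y\in X\rangle$. Construction data: a set with equivalence relation $(X,\sim)$ with $|\overline X|>2$, a subgroup $U\le\mathrm{Sym}(X,\sim)$ and $\tau\in\mathrm{Sym}(X,\sim)$ such that (C1) $U$ fixes a point, called $\infty$, and acts sharply transitively on $X\setminus\overline\infty$; (C1') $\overline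 U$ acts sharply transitively on $\overline X\setminus\{\overline\infty\}$; (C2) $\infty\tau\not\sim\infty$ and $\infty\tau^2=\infty$; put $0:=\infty\tau$. For $x\not\sim\infty$ let $\alpha_x$ be the unique element of $U$ with $0\alpha_x=x$, $-x:=0\alpha_x^{-1}$, and $\gamma_x:=\alpha_x^\tau$. Define $U_\infty:=U$, $U_0:=U^\tau$, $U_x:=U_0^{\alpha_x}$ for $x\not\sim\infty$ and $U_x:=U_\infty^{\gamma_{x\tau^{-1}}}$ for $x\sim\infty$; this is $\mathcal M(U,\tau)$. A unit is $x$ with $x\not\sim0$, $x\not\sim\infty$. For a unit $x$: $\mu_x:=\gamma_{(-x)\tau^{-1}}\,\alpha_x\,\gamma_{-(x\tau^{-1})}$ and $h_x:=\tau\,\alpha_x\,\tau^{-1}\,\alpha_{-(x\tau^{-1})}\,\tau\,\alpha_{-\left((-(x\tau^{-1}))\tau\right)}$. *)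

theory Defs
  imports Main
begin

text \<open>The set X is the universe of the type 'a; the equivalence relation
is R. Permutations are functions 'a => 'a acting on the right: the image of x under g
is written g x. Products are left to right: the product g h (first g, then h) is the
function h o g. Conjugation g^h = h^-1 g h is h o g o inv h.\<close>

definition conj :: "('a \<Rightarrow> 'a) \<Rightarrow> ('a \<Rightarrow> 'a) \<Rightarrow> ('a \<Rightarrow> 'a)" where
  "conj g h = h \<circ> g \<circ> inv h"

definition conjset :: "('a \<Rightarrow> 'a) set \<Rightarrow> ('a \<Rightarrow> 'a) \<Rightarrow> ('a \<Rightarrow> 'a) set" where
  "conjset U h = (\<lambda>g. conj g h) ` U"

text \<open>Left-to-right product of a list of permutations: prodl [g1,...,gn] = g1 g2 ... gn.\<close>
definition prodl :: "('a \<Rightarrow> 'a) list \<Rightarrow> ('a \<Rightarrow> 'a)" where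
  "prodl gs = foldl (\<lambda>acc g. g \<circ> acc) id gs"

definition cls :: "('a \<Rightarrow> 'a \<Rightarrow> bool) \<Rightarrow> 'a \<Rightarrow> 'a set" where
  "cls R x = {y. R x y}"

definition classes :: "('a \<Rightarrow> 'a \<Rightarrow> bool) \<Rightarrow> 'a set set" where
  "classes R = range (cls R)"

definition more_than_two_classes :: "('a \<Rightarrow> 'a \<Rightarrow> bool) \<Rightarrow> bool" where
  "more_than_two_classes R \<longleftrightarrow> infinite (classes R) \<or> 2 < card (classes R)"

definition symeq :: "('a \<Rightarrow> 'a \<Rightarrow> bool) \<Rightarrow> ('a \<Rightarrow> 'a) set" where
  "symeq R = {g. bij g \<and> (\<forall>x y. R x y \<longleftrightarrow> R (g x) (g y))}"

definition subgroup_of :: "('a \<Rightarrow> 'a) set \<Rightarrow> ('a \<Rightarrow> 'a \<Rightarrow> bool) \<Rightarrow> bool" where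
  "subgroup_of U R \<longleftrightarrow> U \<subseteq> symeq R \<and> id \<in> U \<and>
     (\<forall>g\<in>U. \<forall>h\<in>U. h \<circ> g \<in> U) \<and> (\<forall>g\<in>U. inv g \<in> U)"

definition ind :: "('a \<Rightarrow> 'a \<Rightarrow> bool) \<Rightarrow> ('a \<Rightarrow> 'a) \<Rightarrow> 'a set \<Rightarrow> 'a set" where
  "ind R g = (\<lambda>C. if C \<in> classes R then g ` C else C)"

definition indgrp :: "('a \<Rightarrow> 'a \<Rightarrow> bool) \<Rightarrow> ('a \<Rightarrow> 'a) set \<Rightarrow> ('a set \<Rightarrow> 'a set) set" where
  "indgrp R U = ind R ` U"

definition sharply_transitive :: "('b \<Rightarrow> 'b) set \<Rightarrow> 'b set \<Rightarrow> bool" where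
  "sharply_transitive G S \<longleftrightarrow> (\<forall>g\<in>G. \<forall>a\<in>S. g a \<in> S) \<and>
     (\<forall>a\<in>S. \<forall>b\<in>S. \<exists>!g. g \<in> G \<and> g a = b)"

inductive_set gen :: "('a \<Rightarrow> 'a) set \<Rightarrow> ('a \<Rightarrow> 'a) set" for S where
  gen_base: "g \<in> S \<Longrightarrow> g \<in> gen S"
| gen_id: "id \<in> gen S"
| gen_comp: "g \<in> gen S \<Longrightarrow> h \<in> gen S \<Longrightarrow> h \<circ> g \<in> gen S"
| gen_inv: "g \<in> gen S \<Longrightarrow> inv g \<in> gen S"

definition LM0 :: "('a \<Rightarrow> 'a \<Rightarrow> bool) \<Rightarrow> ('a \<Rightarrow> ('a \<Rightarrow> 'a) set) \<Rightarrow> bool" where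
  "LM0 R Uf \<longleftrightarrow> (\<forall>x y. R x y \<longrightarrow> indgrp R (Uf x) = indgrp R (Uf y))"

definition LM1 :: "('a \<Rightarrow> 'a \<Rightarrow> bool) \<Rightarrow> ('a \<Rightarrow> ('a \<Rightarrow> 'a) set) \<Rightarrow> bool" where
  "LM1 R Uf \<longleftrightarrow> (\<forall>x. (\<forall>g\<in>Uf x. g x = x) \<and> sharply_transitive (Uf x) (- cls R x))"

definition LM1' :: "('a \<Rightarrow> 'a \<Rightarrow> bool) \<Rightarrow> ('a \<Rightarrow> ('a \<Rightarrow> 'a) set) \<Rightarrow> bool" where
  "LM1' R Uf \<longleftrightarrow> (\<forall>x. (\<forall>g\<in>indgrp R (Uf x). g (cls R x) = cls R x) \<and>
      sharply_transitive (indgrp R (Uf x)) (classes R - {cls R x}))"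

definition LM2 :: "('a \<Rightarrow> 'a \<Rightarrow> bool) \<Rightarrow> ('a \<Rightarrow> ('a \<Rightarrow> 'a) set) \<Rightarrow> bool" where
  "LM2 R Uf \<longleftrightarrow> (\<forall>x. \<forall>g\<in>gen (\<Union>y. Uf y). conjset (Uf x) g = Uf (g x))"

definition local_moufang :: "('a \<Rightarrow> 'a \<Rightarrow> bool) \<Rightarrow> ('a \<Rightarrow> ('a \<Rightarrow> 'a) set) \<Rightarrow> bool" where
  "local_moufang R Uf \<longleftrightarrow> equivp R \<and> more_than_two_classes R \<and>
     (\<forall>x. subgroup_of (Uf x) R) \<and> LM0 R Uf \<and> LM1 R Uf \<and> LM1' R Uf \<and> LM2 R Uf"

definition construction_data ::
  "('a \<Rightarrow> 'a \<Rightarrow> bool) \<Rightarrow> ('a \<Rightarrow> 'a) set \<Rightarrow> 'a \<Rightarrow> ('a \<Rightarrow> 'a) \<Rightarrow> bool" where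
  "construction_data R U ioo \<tau> \<longleftrightarrow> equivp R \<and> more_than_two_classes R \<and>
     subgroup_of U R \<and> \<tau> \<in> symeq R \<and>
     (\<forall>g\<in>U. g ioo = ioo) \<and> sharply_transitive U (- cls R ioo) \<and>
     sharply_transitive (indgrp R U) (classes R - {cls R ioo}) \<and>
     \<not> R (\<tau> ioo) ioo \<and> \<tau> (\<tau> ioo) = ioo"

definition alpha :: "('a \<Rightarrow> 'a) set \<Rightarrow> 'a \<Rightarrow> ('a \<Rightarrow> 'a) \<Rightarrow> 'a \<Rightarrow> ('a \<Rightarrow> 'a)" where
  "alpha U ioo \<tau> x = (THE a. a \<in> U \<and> a (\<tau> ioo) = x)"

definition neg :: "('a \<Rightarrow> 'a) set \<Rightarrow> 'a \<Rightarrow> ('a \<Rightarrow> 'a) \<Rightarrow> 'a \<Rightarrow> 'a" where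
  "neg U ioo \<tau> x = inv (alpha U ioo \<tau> x) (\<tau> ioo)"

definition gamma :: "('a \<Rightarrow> 'a) set \<Rightarrow> 'a \<Rightarrow> ('a \<Rightarrow> 'a) \<Rightarrow> 'a \<Rightarrow> ('a \<Rightarrow> 'a)" where
  "gamma U ioo \<tau> x = conj (alpha U ioo \<tau> x) \<tau>"

definition MU :: "('a \<Rightarrow> 'a \<Rightarrow> bool) \<Rightarrow> ('a \<Rightarrow> 'a) set \<Rightarrow> 'a \<Rightarrow> ('a \<Rightarrow> 'a) \<Rightarrow> 'a \<Rightarrow> ('a \<Rightarrow> 'a) set" where
  "MU R U ioo \<tau> x = (if R x ioo then conjset U (gamma U ioo \<tau> (inv \<tau> x))
                     else conjset (conjset U \<tau>) (alpha U ioo \<tau> x))"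

definition is_unit :: "('a \<Rightarrow> 'a \<Rightarrow> bool) \<Rightarrow> 'a \<Rightarrow> ('a \<Rightarrow> 'a) \<Rightarrow> 'a \<Rightarrow> bool" where
  "is_unit R ioo \<tau> x \<longleftrightarrow> \<not> R x (\<tau> ioo) \<and> \<not> R x ioo"

definition mu :: "('a \<Rightarrow> 'a) set \<Rightarrow> 'a \<Rightarrow> ('a \<Rightarrow> 'a) \<Rightarrow> 'a \<Rightarrow> ('a \<Rightarrow> 'a)" where
  "mu U ioo \<tau> x = prodl [gamma U ioo \<tau> (inv \<tau> (neg U ioo \<tau> x)),
                          alpha U ioo \<tau> x,
                          gamma U ioo \<tau> (neg U ioo \<tau> (inv \<tau> x))]"

definition hh :: "('a \<Rightarrow> 'a) set \<Rightarrow> 'a \<Rightarrow> ('a \<Rightarrow> 'a) \<Rightarrow> 'a \<Rightarrow> ('a \<Rightarrow> 'a)" where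
  "hh U ioo \<tau> x = prodl [\<tau>, alpha U ioo \<tau> x, inv \<tau>,
                          alpha U ioo \<tau> (neg U ioo \<tau> (inv \<tau> x)), \<tau>,
                          alpha U ioo \<tau> (neg U ioo \<tau> (\<tau> (neg U ioo \<tau> (inv \<tau> x))))]"

end

theory Submission
  imports Defs
begin

text \<open>The root group at \<open>x\<close> is the conjugate of \<open>U\<close> by a permutation carrying \<open>\<infinity>\<close> to \<open>x\<close>;
  this transports (C1) and (C1') to (LM1) and (LM1'), and (LM0) holds because for equivalent
  points these permutations induce the same map on classes. Up to factors from \<open>U\<close>, \<open>h\<^sub>x\<close> is
  \<open>\<tau> \<mu>\<^sub>x\<close>, and \<open>\<mu>\<^sub>-\<^sub>x = \<mu>\<^sub>x\<^sup>-\<^sup>1\<close>; hence (ii) and (iii) are equivalent. As \<open>\<mu>\<^sub>x\<close> lies in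
  \<open>\<langle>U, U\<^sup>\<tau>\<rangle>\<close> and maps \<open>\<infinity>\<close> to \<open>0\<close>, (LM2) forces (iii). Conversely, under (iii) each \<open>\<mu>\<^sub>x\<close>
  swaps \<open>U\<close> and \<open>U\<^sup>\<tau>\<close> and therefore conjugates every root group onto the one at the image
  point. Elements of \<open>U\<close> and \<open>U\<^sup>\<tau>\<close> do the same away from the class of their fixed point, and
  the remaining cases are reduced to these by factoring elements of \<open>U\<^sup>\<tau>\<close> through some \<open>\<mu>\<^sub>y\<close>.\<close>

section \<open>Permutations, conjugation and the induced action on classes\<close>

lemma bij_comp_inv [simp]: "bij h \<Longrightarrow> h \<circ> inv h = id"
  using bij_is_surj surj_iff by blast

lemma bij_comp_inv_cancel [simp]: "bij h \<Longrightarrow> h \<circ> (inv h \<circ> g) = g"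
  by (simp add: comp_assoc[symmetric])

lemma bij_inv_comp_cancel [simp]: "bij h \<Longrightarrow> inv h \<circ> (h \<circ> g) = g"
  by (simp add: comp_assoc[symmetric] bij_is_inj)

lemma bij_apply_inv [simp]: "bij h \<Longrightarrow> h (inv h x) = x"
  by (simp add: bij_is_surj surj_f_inv_f)

lemma bij_inv_apply [simp]: "bij h \<Longrightarrow> inv h (h x) = x"
  by (simp add: bij_is_inj)

lemma conjset_image: "conjset A h = (\<lambda>g. h \<circ> g \<circ> inv h) ` A"
  unfolding conjset_def conj_def ..

lemma conjset_id [simp]: "conjset A id = A"
  by (simp add: conjset_image)

lemma conjset_conjset: "bij h \<Longrightarrow> bij k \<Longrightarrow> conjset (conjset A h) k = conjset A (k \<circ> h)"
  by (simp add: conjset_image image_comp o_inv_distrib comp_assoc)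

lemma conjset_conjset_inv [simp]: "bij h \<Longrightarrow> conjset (conjset A h) (inv h) = A"
  by (simp add: conjset_conjset bij_imp_bij_inv bij_is_inj)

lemma conjset_inv_conjset [simp]: "bij h \<Longrightarrow> conjset (conjset A (inv h)) h = A"
  by (simp add: conjset_conjset bij_imp_bij_inv)

lemma symeq_bij: "g \<in> symeq R \<Longrightarrow> bij g"
  by (simp add: symeq_def)

lemma symeq_rel_iff: "g \<in> symeq R \<Longrightarrow> R (g x) (g y) \<longleftrightarrow> R x y"
  by (simp add: symeq_def)

lemma symeq_id: "id \<in> symeq R"
  by (simp add: symeq_def)

lemma symeq_comp: "g \<in> symeq R \<Longrightarrow> h \<in> symeq R \<Longrightarrow> h \<circ> g \<in> symeq R"
  by (simp add: symeq_def bij_comp)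

lemma symeq_inv: "g \<in> symeq R \<Longrightarrow> inv g \<in> symeq R"
proof -
  assume g: "g \<in> symeq R"
  have "R (inv g x) (inv g y) \<longleftrightarrow> R x y" for x y
    using symeq_rel_iff[OF g, of "inv g x" "inv g y"] symeq_bij[OF g] by simp
  then show ?thesis
    using g by (simp add: symeq_def bij_imp_bij_inv)
qed

lemma subgroup_conjset_self:
  assumes U: "subgroup_of U R" and h: "h \<in> U"
  shows "conjset U h = U"
proof
  show "conjset U h \<subseteq> U"
    using U h by (auto simp: conjset_image subgroup_of_def)
  show "U \<subseteq> conjset U h"
  proof
    fix g assume g: "g \<in> U"
    have "bij h" using U h by (auto simp: subgroup_of_def symeq_def)
    then have "g = h \<circ> (inv h \<circ> g \<circ> h) \<circ> inv h"
      by (simp add: comp_assoc)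
    moreover have "inv h \<circ> g \<circ> h \<in> U"
      using U g h by (simp add: subgroup_of_def)
    ultimately show "g \<in> conjset U h"
      unfolding conjset_image by blast
  qed
qed

lemma conjset_conjset_commute:
  "bij f \<Longrightarrow> bij k \<Longrightarrow> conjset (conjset A f) k = conjset (conjset A k) (k \<circ> f \<circ> inv k)"
  by (simp add: conjset_conjset bij_comp bij_imp_bij_inv bij_is_inj comp_assoc)

lemma conjset_eq_iff_conjset_inv: "bij h \<Longrightarrow> conjset A h = B \<longleftrightarrow> A = conjset B (inv h)"
  by (metis conjset_conjset_inv conjset_inv_conjset)

lemma subgroup_conjset_eq_self_iff:
  "subgroup_of G R \<Longrightarrow> h \<in> G \<Longrightarrow> conjset A h = G \<longleftrightarrow> A = G"
  by (metis conjset_eq_iff_conjset_inv subgroup_conjset_self subgroup_of_def symeq_bij subsetD)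

lemma subgroup_of_conjset:
  assumes U: "subgroup_of U R" and h: "h \<in> symeq R"
  shows "subgroup_of (conjset U h) R"
proof -
  have bh: "bij h" using symeq_bij[OF h] .
  have U_bij: "bij g" if "g \<in> U" for g
    using U that by (auto simp: subgroup_of_def symeq_def)
  have comp: "(h \<circ> g2 \<circ> inv h) \<circ> (h \<circ> g1 \<circ> inv h) = h \<circ> (g2 \<circ> g1) \<circ> inv h" for g1 g2
    using bh by (simp add: comp_assoc)
  have inverse: "inv (h \<circ> g \<circ> inv h) = h \<circ> inv g \<circ> inv h" if "g \<in> U" for g
    using bh U_bij[OF that]
    by (simp add: o_inv_distrib bij_comp bij_imp_bij_inv inv_inv_eq comp_assoc)
  have "h \<circ> id \<circ> inv h = id"
    using bh by simp
  then show ?thesis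
    using U h comp inverse unfolding subgroup_of_def conjset_image
    by (auto intro!: symeq_comp symeq_inv image_eqI)
qed

lemma sharply_transitive_conj:
  assumes st: "sharply_transitive G S" and KK': "K' \<circ> K = id" and K'K: "K \<circ> K' = id"
  shows "sharply_transitive ((\<lambda>g. K \<circ> g \<circ> K') ` G) (K ` S)"
proof -
  have K'_K: "K' (K s) = s" for s
    using KK' by (metis comp_apply id_apply)
  have K_inj: "K s = K t \<longleftrightarrow> s = t" for s t
    using K'_K by metis
  show ?thesis
    unfolding sharply_transitive_def
  proof (intro conjI ballI)
    fix h a assume "h \<in> (\<lambda>g. K \<circ> g \<circ> K') ` G" "a \<in> K ` S"
    then show "h a \<in> K ` S"
      using st K'_K by (auto simp: sharply_transitive_def)
  next
    fix a b assume "a \<in> K ` S" "b \<in> K ` S"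
    then obtain s t where s: "s \<in> S" "a = K s" and t: "t \<in> S" "b = K t"
      by auto
    obtain g where g: "g \<in> G" "g s = t" and unique: "\<And>g'. g' \<in> G \<Longrightarrow> g' s = t \<Longrightarrow> g' = g"
      using st s t unfolding sharply_transitive_def by metis
    show "\<exists>!h. h \<in> (\<lambda>g. K \<circ> g \<circ> K') ` G \<and> h a = b"
    proof (rule ex1I)
      show "K \<circ> g \<circ> K' \<in> (\<lambda>g. K \<circ> g \<circ> K') ` G \<and> (K \<circ> g \<circ> K') a = b"
        using g s t by (simp add: K'_K)
    next
      fix h assume "h \<in> (\<lambda>g. K \<circ> g \<circ> K') ` G \<and> h a = b"
      then obtain g' where "g' \<in> G" "h = K \<circ> g' \<circ> K'" "g' s = t"
        using s t by (auto simp: K'_K K_inj)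
      then show "h = K \<circ> g \<circ> K'"
        using unique by simp
    qed
  qed
qed

lemma sharply_transitive_conjset:
  "sharply_transitive G S \<Longrightarrow> bij k \<Longrightarrow> sharply_transitive (conjset G k) (k ` S)"
  unfolding conjset_image by (rule sharply_transitive_conj) (auto simp: bij_is_inj)

lemma cls_eq_iff: "equivp R \<Longrightarrow> cls R a = cls R b \<longleftrightarrow> R a b"
  unfolding cls_def by (metis (mono_tags, lifting) equivp_def mem_Collect_eq)

lemma cls_in_classes [simp]: "cls R a \<in> classes R"
  by (simp add: classes_def)

lemma image_cls: "k \<in> symeq R \<Longrightarrow> k ` cls R a = cls R (k a)"
  using symeq_rel_iff[of k R a "inv k _"] symeq_bij[of k R] by (force simp: cls_def)

lemma image_Compl_cls: "k \<in> symeq R \<Longrightarrow> k ` (- cls R a) = - cls R (k a)"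
  by (metis bij_image_Compl_eq image_cls symeq_bij)

lemma ind_cls: "k \<in> symeq R \<Longrightarrow> ind R k (cls R a) = cls R (k a)"
  by (simp add: ind_def image_cls)

lemma ind_id [simp]: "ind R id = id"
  by (rule ext) (simp add: ind_def)

lemma ind_comp: "f \<in> symeq R \<Longrightarrow> g \<in> symeq R \<Longrightarrow> ind R (f \<circ> g) = ind R f \<circ> ind R g"
  by (rule ext) (auto simp: ind_def classes_def image_cls symeq_comp)

lemma ind_comp_ind_inv: "k \<in> symeq R \<Longrightarrow> ind R k \<circ> ind R (inv k) = id"
  by (simp add: ind_comp[symmetric] symeq_inv symeq_bij)

lemma ind_inv_comp_ind: "k \<in> symeq R \<Longrightarrow> ind R (inv k) \<circ> ind R k = id"
  by (simp add: ind_comp[symmetric] symeq_inv symeq_bij bij_is_inj)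

lemma ind_inv: "k \<in> symeq R \<Longrightarrow> ind R (inv k) = inv (ind R k)"
  by (rule inv_unique_comp[symmetric]) (simp_all add: ind_comp_ind_inv ind_inv_comp_ind)

lemma indgrp_conjset:
  "k \<in> symeq R \<Longrightarrow> U \<subseteq> symeq R \<Longrightarrow>
    indgrp R (conjset U k) = (\<lambda>G. ind R k \<circ> G \<circ> inv (ind R k)) ` indgrp R U"
  unfolding indgrp_def conjset_image image_comp
  by (rule image_cong) (auto simp: ind_comp ind_inv symeq_comp symeq_inv)

lemma ind_image_classes_Diff:
  assumes k: "k \<in> symeq R"
  shows "ind R k ` (classes R - {cls R a}) = classes R - {cls R (k a)}"
proof -
  have "ind R k ` classes R = cls R ` range k"
    unfolding classes_def image_image using ind_cls[OF k] by simp
  then have "ind R k ` classes R = classes R"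
    using symeq_bij[OF k] by (simp add: classes_def bij_is_surj)
  moreover have "inj_on (ind R k) (classes R)"
    using ind_inv_comp_ind[OF k] by (metis comp_apply id_apply inj_on_inverseI)
  ultimately show ?thesis
    by (simp add: inj_on_image_set_diff ind_cls[OF k])
qed

section \<open>The construction \<open>\<M>(U, \<tau>)\<close>\<close>

locale moufang_construction =
  fixes R :: "'a \<Rightarrow> 'a \<Rightarrow> bool" and U :: "('a \<Rightarrow> 'a) set"
    and ioo :: 'a and \<tau> :: "'a \<Rightarrow> 'a"
  assumes data: "construction_data R U ioo \<tau>"
begin

abbreviation zero_pt :: 'a where "zero_pt \<equiv> \<tau> ioo"
abbreviation U0 where "U0 \<equiv> conjset U \<tau>"
abbreviation Ux where "Ux \<equiv> MU R U ioo \<tau>"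
abbreviation \<alpha> where "\<alpha> \<equiv> alpha U ioo \<tau>"
abbreviation \<gamma> where "\<gamma> \<equiv> gamma U ioo \<tau>"
abbreviation opp where "opp \<equiv> neg U ioo \<tau>"

lemma equivp: "equivp R"
  using data by (simp add: construction_data_def)

lemma R_refl [simp]: "R x x"
  using equivp by (simp add: equivp_reflp)

lemma R_sym: "R x y \<Longrightarrow> R y x"
  using equivp by (rule equivp_symp)

lemma R_trans: "R x y \<Longrightarrow> R y w \<Longrightarrow> R x w"
  using equivp by (rule equivp_transp)

lemma R_cong_left: "R a b \<Longrightarrow> R a c \<longleftrightarrow> R b c"
  using R_sym R_trans by blast

lemma more_than_two: "more_than_two_classes R"
  using data by (simp add: construction_data_def)

lemma subgroup_U: "subgroup_of U R"
  using data by (simp add: construction_data_def)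

lemma U_symeq: "u \<in> U \<Longrightarrow> u \<in> symeq R"
  using subgroup_U by (auto simp: subgroup_of_def)

lemma U_bij: "u \<in> U \<Longrightarrow> bij u"
  using U_symeq symeq_bij by blast

lemma U_comp: "u \<in> U \<Longrightarrow> w \<in> U \<Longrightarrow> w \<circ> u \<in> U"
  using subgroup_U by (simp add: subgroup_of_def)

lemma U_inv: "u \<in> U \<Longrightarrow> inv u \<in> U"
  using subgroup_U by (simp add: subgroup_of_def)

lemma id_in_U: "id \<in> U"
  using subgroup_U by (simp add: subgroup_of_def)

lemma U_fixes_inf: "u \<in> U \<Longrightarrow> u ioo = ioo"
  using data by (simp add: construction_data_def)

lemma U_rel_inf_iff: "u \<in> U \<Longrightarrow> R (u x) ioo \<longleftrightarrow> R x ioo"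
  using symeq_rel_iff[OF U_symeq, of u x ioo] U_fixes_inf[of u] by simp

lemma sharply_transitive_U: "sharply_transitive U (- cls R ioo)"
  using data by (simp add: construction_data_def)

lemma sharply_transitive_ind_U: "sharply_transitive (indgrp R U) (classes R - {cls R ioo})"
  using data by (simp add: construction_data_def)

lemma tau_symeq: "\<tau> \<in> symeq R"
  using data by (simp add: construction_data_def)

lemma tau_bij: "bij \<tau>"
  using symeq_bij[OF tau_symeq] .

lemma zero_not_inf: "\<not> R zero_pt ioo"
  using data by (simp add: construction_data_def)

lemma inf_not_zero: "\<not> R ioo zero_pt"
  using zero_not_inf R_sym by blast

lemma tau_zero [simp]: "\<tau> zero_pt = ioo"
  using data by (simp add: construction_data_def)

lemma inv_tau_inf [simp]: "inv \<tau> ioo = zero_pt"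
  by (metis tau_bij tau_zero bij_inv_apply)

lemma inv_tau_zero [simp]: "inv \<tau> zero_pt = ioo"
  using tau_bij by simp

lemma tau_rel_inf_iff [simp]: "R (\<tau> a) ioo \<longleftrightarrow> R a zero_pt"
  using symeq_rel_iff[OF tau_symeq, of a zero_pt] by simp

lemma tau_rel_zero_iff [simp]: "R (\<tau> a) zero_pt \<longleftrightarrow> R a ioo"
  using symeq_rel_iff[OF tau_symeq, of a ioo] by simp

lemma inv_tau_rel_inf_iff [simp]: "R (inv \<tau> a) ioo \<longleftrightarrow> R a zero_pt"
  using symeq_rel_iff[OF tau_symeq, of "inv \<tau> a" ioo] tau_bij by simp

lemma inv_tau_rel_zero_iff [simp]: "R (inv \<tau> a) zero_pt \<longleftrightarrow> R a ioo"
  using symeq_rel_iff[OF tau_symeq, of "inv \<tau> a" zero_pt] tau_bij by simp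

lemma alpha_ex1: "\<not> R x ioo \<Longrightarrow> \<exists>!g. g \<in> U \<and> g zero_pt = x"
  using sharply_transitive_U inf_not_zero R_sym
  unfolding sharply_transitive_def cls_def by blast

lemma alpha_in_U: "\<not> R x ioo \<Longrightarrow> \<alpha> x \<in> U"
  unfolding alpha_def by (rule theI'[OF alpha_ex1, THEN conjunct1])

lemma alpha_zero [simp]: "\<not> R x ioo \<Longrightarrow> \<alpha> x zero_pt = x"
  unfolding alpha_def by (rule theI'[OF alpha_ex1, THEN conjunct2])

lemma alpha_apply_zero: "u \<in> U \<Longrightarrow> \<alpha> (u zero_pt) = u"
  unfolding alpha_def
  using U_rel_inf_iff zero_not_inf by (intro the1_equality alpha_ex1) auto

lemma alpha_zero_pt [simp]: "\<alpha> zero_pt = id"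
  using alpha_apply_zero[OF id_in_U] by simp

lemma alpha_bij: "\<not> R x ioo \<Longrightarrow> bij (\<alpha> x)"
  using U_bij alpha_in_U by blast

lemma inv_alpha_self [simp]: "\<not> R x ioo \<Longrightarrow> inv (\<alpha> x) x = zero_pt"
  by (metis alpha_bij alpha_zero bij_inv_apply)

lemma alpha_opp_self [simp]: "\<not> R x ioo \<Longrightarrow> \<alpha> x (opp x) = zero_pt"
  using alpha_bij by (simp add: neg_def)

lemma opp_not_inf: "\<not> R x ioo \<Longrightarrow> \<not> R (opp x) ioo"
  using U_rel_inf_iff[OF U_inv[OF alpha_in_U]] zero_not_inf by (simp add: neg_def)

lemma alpha_opp: "\<not> R x ioo \<Longrightarrow> \<alpha> (opp x) = inv (\<alpha> x)"
  using alpha_apply_zero[OF U_inv[OF alpha_in_U]] by (simp add: neg_def)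

lemma opp_opp [simp]: "\<not> R x ioo \<Longrightarrow> opp (opp x) = x"
  using alpha_opp alpha_bij by (simp add: neg_def inv_inv_eq)

lemma opp_rel_zero_iff: "\<not> R x ioo \<Longrightarrow> R (opp x) zero_pt \<longleftrightarrow> R x zero_pt"
  using symeq_rel_iff[OF U_symeq[OF alpha_in_U], of x "opp x" zero_pt] alpha_bij R_sym
  by (auto simp: neg_def)

lemma gamma_eq: "\<gamma> a = \<tau> \<circ> \<alpha> a \<circ> inv \<tau>"
  by (simp add: gamma_def conj_def)

lemma subgroup_U0: "subgroup_of U0 R"
  using subgroup_of_conjset[OF subgroup_U tau_symeq] .

lemma U0_symeq: "v \<in> U0 \<Longrightarrow> v \<in> symeq R"
  using subgroup_U0 by (auto simp: subgroup_of_def)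

lemma U0_bij: "v \<in> U0 \<Longrightarrow> bij v"
  using U0_symeq symeq_bij by blast

lemma U0_comp: "u \<in> U0 \<Longrightarrow> w \<in> U0 \<Longrightarrow> w \<circ> u \<in> U0"
  using subgroup_U0 by (simp add: subgroup_of_def)

lemma U0_inv: "u \<in> U0 \<Longrightarrow> inv u \<in> U0"
  using subgroup_U0 by (simp add: subgroup_of_def)

lemma U0_fixes_zero: "v \<in> U0 \<Longrightarrow> v zero_pt = zero_pt"
  using tau_bij by (auto simp: conjset_image U_fixes_inf)

lemma U0_rel_zero_iff: "v \<in> U0 \<Longrightarrow> R (v x) zero_pt \<longleftrightarrow> R x zero_pt"
  using symeq_rel_iff[OF U0_symeq, of v x zero_pt] U0_fixes_zero[of v] by simp

lemma gamma_in_U0: "\<not> R a ioo \<Longrightarrow> \<gamma> a \<in> U0"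
  using alpha_in_U by (auto simp: gamma_eq conjset_image)

lemma gamma_symeq: "\<not> R a ioo \<Longrightarrow> \<gamma> a \<in> symeq R"
  using U0_symeq gamma_in_U0 by blast

lemma gamma_bij: "\<not> R a ioo \<Longrightarrow> bij (\<gamma> a)"
  using U0_bij gamma_in_U0 by blast

lemma gamma_inf [simp]: "\<not> R a ioo \<Longrightarrow> \<gamma> a ioo = \<tau> a"
  by (simp add: gamma_eq)

lemma gamma_zero_pt [simp]: "\<gamma> zero_pt = id"
  using tau_bij by (simp add: gamma_eq)

lemma U0_eq_gamma: "v \<in> U0 \<Longrightarrow> v = \<gamma> (inv \<tau> (v ioo))"
proof -
  assume "v \<in> U0"
  then obtain u where "u \<in> U" "v = \<tau> \<circ> u \<circ> inv \<tau>"
    by (auto simp: conjset_image)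
  then show ?thesis
    using tau_bij by (simp add: gamma_eq alpha_apply_zero)
qed

lemma gamma_opp: "\<not> R a ioo \<Longrightarrow> inv (\<gamma> a) = \<gamma> (opp a)"
  using tau_bij alpha_bij alpha_opp
  by (simp add: gamma_eq o_inv_distrib bij_comp bij_imp_bij_inv inv_inv_eq comp_assoc)

lemma Ux_inf: "Ux ioo = U"
  by (simp add: MU_def)

lemma Ux_zero: "Ux zero_pt = U0"
  using zero_not_inf by (simp add: MU_def)

lemma inf_class_not_zero: "R x ioo \<Longrightarrow> \<not> R x zero_pt"
  using R_cong_left inf_not_zero by blast

definition transporter :: "'a \<Rightarrow> 'a \<Rightarrow> 'a" where
  "transporter x = (if R x ioo then \<gamma> (inv \<tau> x) else \<alpha> x \<circ> \<tau>)"

lemma Ux_eq_conjset_transporter: "Ux x = conjset U (transporter x)"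
  using alpha_bij tau_bij by (simp add: transporter_def MU_def conjset_conjset)

lemma transporter_symeq: "transporter x \<in> symeq R"
  using inf_class_not_zero
  by (simp add: transporter_def gamma_symeq symeq_comp tau_symeq U_symeq alpha_in_U)

lemma transporter_inf [simp]: "transporter x ioo = x"
  using inf_class_not_zero tau_bij by (simp add: transporter_def)

lemma transporter_bij: "bij (transporter x)"
  using symeq_bij[OF transporter_symeq] .

lemma inv_transporter [simp]: "inv (transporter x) x = ioo"
  using transporter_bij by (metis transporter_inf bij_inv_apply)

lemma subgroup_Ux: "subgroup_of (Ux x) R"
  using subgroup_of_conjset[OF subgroup_U transporter_symeq] Ux_eq_conjset_transporter by simp

lemma Ux_symeq: "g \<in> Ux x \<Longrightarrow> g \<in> symeq R"
  using subgroup_Ux[of x] by (auto simp: subgroup_of_def)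

lemma Ux_fixes: "g \<in> Ux x \<Longrightarrow> g x = x"
  by (auto simp: Ux_eq_conjset_transporter conjset_image U_fixes_inf)

lemma LM1: "LM1 R Ux"
proof -
  have "sharply_transitive (Ux x) (transporter x ` (- cls R ioo))" for x
    using sharply_transitive_conjset[OF sharply_transitive_U transporter_bij]
    by (simp add: Ux_eq_conjset_transporter)
  then show ?thesis
    unfolding LM1_def using Ux_fixes image_Compl_cls[OF transporter_symeq] by simp
qed

lemma indgrp_Ux:
  "indgrp R (Ux x) =
    (\<lambda>G. ind R (transporter x) \<circ> G \<circ> inv (ind R (transporter x))) ` indgrp R U"
  using indgrp_conjset[OF transporter_symeq] U_symeq
  by (auto simp: Ux_eq_conjset_transporter)

lemma ind_Ux_fixes: "g \<in> indgrp R (Ux x) \<Longrightarrow> g (cls R x) = cls R x"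
proof -
  assume "g \<in> indgrp R (Ux x)"
  then obtain k where "k \<in> Ux x" "g = ind R k"
    by (auto simp: indgrp_def)
  then show ?thesis
    by (simp add: ind_cls Ux_symeq Ux_fixes)
qed

lemma LM1': "LM1' R Ux"
proof -
  have "sharply_transitive (indgrp R (Ux x)) (ind R (transporter x) ` (classes R - {cls R ioo}))" for x
    unfolding indgrp_Ux ind_inv[OF transporter_symeq, symmetric]
    by (intro sharply_transitive_conj[OF sharply_transitive_ind_U]
        ind_comp_ind_inv ind_inv_comp_ind transporter_symeq)
  then show ?thesis
    unfolding LM1'_def using ind_Ux_fixes ind_image_classes_Diff[OF transporter_symeq] by simp
qed

lemma ind_U_unique:
  assumes u: "u \<in> U" and w: "w \<in> U" and a: "\<not> R a ioo" and uw: "R (u a) (w a)"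
  shows "ind R u = ind R w"
proof -
  have "cls R a \<in> classes R - {cls R ioo}"
    using a cls_eq_iff[OF equivp] by simp
  moreover have "ind R u (cls R a) = ind R w (cls R a)"
    using uw ind_cls[OF U_symeq[OF u]] ind_cls[OF U_symeq[OF w]] cls_eq_iff[OF equivp] by simp
  moreover have "ind R u \<in> indgrp R U" "ind R w \<in> indgrp R U"
    using u w by (auto simp: indgrp_def)
  ultimately show ?thesis
    using sharply_transitive_ind_U unfolding sharply_transitive_def by metis
qed

lemma ind_transporter_inf_class: "R x ioo \<Longrightarrow> ind R (transporter x) = id"
proof -
  assume x: "R x ioo"
  have a: "\<not> R (inv \<tau> x) ioo"
    using x inf_class_not_zero by simp
  have "ind R (\<alpha> (inv \<tau> x)) = ind R id"
    using ind_U_unique[OF alpha_in_U[OF a] id_in_U zero_not_inf] a x R_sym by simp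
  then show ?thesis
    using x ind_comp_ind_inv[OF tau_symeq]
    by (simp add: transporter_def gamma_eq ind_comp tau_symeq symeq_comp symeq_inv
        U_symeq alpha_in_U[OF a])
qed

lemma ind_transporter_cong: "R x y \<Longrightarrow> ind R (transporter x) = ind R (transporter y)"
proof (cases "R x ioo")
  case True
  moreover assume "R x y"
  ultimately show ?thesis
    using ind_transporter_inf_class R_cong_left by metis
next
  case False
  moreover assume xy: "R x y"
  then have "\<not> R y ioo"
    using False R_cong_left by blast
  moreover have "ind R (\<alpha> x) = ind R (\<alpha> y)"
    using ind_U_unique[OF alpha_in_U[OF False] alpha_in_U zero_not_inf] xy \<open>\<not> R y ioo\<close> False by simp
  ultimately show ?thesis
    by (simp add: transporter_def ind_comp U_symeq alpha_in_U tau_symeq)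
qed

lemma LM0: "LM0 R Ux"
  unfolding LM0_def indgrp_Ux by (auto dest: ind_transporter_cong)

section \<open>Units, \<open>\<mu>\<^sub>x\<close> and \<open>h\<^sub>x\<close>\<close>

abbreviation isunit where "isunit \<equiv> is_unit R ioo \<tau>"
abbreviation \<mu> where "\<mu> \<equiv> mu U ioo \<tau>"

lemma isunitI: "\<not> R x zero_pt \<Longrightarrow> \<not> R x ioo \<Longrightarrow> isunit x"
  by (simp add: is_unit_def)

lemma isunit_opp [simp]: "isunit x \<Longrightarrow> isunit (opp x)"
  using opp_not_inf opp_rel_zero_iff by (simp add: is_unit_def)

lemma isunit_tau [simp]: "isunit x \<Longrightarrow> isunit (\<tau> x)"
  by (simp add: is_unit_def)

lemma isunit_inv_tau [simp]: "isunit x \<Longrightarrow> isunit (inv \<tau> x)"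
  by (simp add: is_unit_def)

lemma isunit_not_inf [simp]: "isunit x \<Longrightarrow> \<not> R x ioo"
  by (simp add: is_unit_def)

lemma isunit_not_zero [simp]: "isunit x \<Longrightarrow> \<not> R x zero_pt"
  by (simp add: is_unit_def)

lemma mu_eq: "\<mu> y = \<gamma> (opp (inv \<tau> y)) \<circ> \<alpha> y \<circ> \<gamma> (inv \<tau> (opp y))"
  unfolding mu_def prodl_def by (simp add: comp_assoc)

lemma mu_symeq: "isunit y \<Longrightarrow> \<mu> y \<in> symeq R"
  unfolding mu_eq by (intro symeq_comp gamma_symeq U_symeq[OF alpha_in_U]) simp_all

lemma mu_bij: "isunit y \<Longrightarrow> bij (\<mu> y)"
  using symeq_bij[OF mu_symeq] .

lemma mu_inf [simp]: "isunit y \<Longrightarrow> \<mu> y ioo = zero_pt"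
  using tau_bij U0_fixes_zero[OF gamma_in_U0, of "opp (inv \<tau> y)"]
  by (simp add: mu_eq)

lemma mu_zero [simp]: "isunit y \<Longrightarrow> \<mu> y zero_pt = ioo"
  using tau_bij U0_fixes_zero[OF gamma_in_U0, of "inv \<tau> (opp y)"]
  by (simp add: mu_eq gamma_eq alpha_opp)

lemma mu_opp: "isunit y \<Longrightarrow> \<mu> (opp y) = inv (\<mu> y)"
  using gamma_opp[of "inv \<tau> (opp y)"] gamma_opp[of "opp (inv \<tau> y)"] alpha_opp[of y]
  by (simp add: mu_eq o_inv_distrib bij_comp gamma_bij alpha_bij comp_assoc)

lemma hh_eq_mu:
  assumes x: "isunit x"
  shows "hh U ioo \<tau> x = \<alpha> (opp (\<tau> (opp (inv \<tau> x)))) \<circ> \<mu> x \<circ> \<tau> \<circ> inv (\<alpha> (inv \<tau> (opp x)))"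
proof -
  have "bij (\<alpha> (inv \<tau> (opp x)))"
    using x by (simp add: alpha_bij)
  then show ?thesis
    unfolding hh_def prodl_def mu_eq gamma_eq using tau_bij by (simp add: comp_assoc)
qed

lemma conjset_hh_eq_U_iff:
  assumes x: "isunit x"
  shows "conjset U (hh U ioo \<tau> x) = U \<longleftrightarrow> conjset U0 (\<mu> x) = U"
proof -
  define a where "a = \<alpha> (opp (\<tau> (opp (inv \<tau> x))))"
  define c where "c = \<alpha> (inv \<tau> (opp x))"
  have a: "a \<in> U" and c: "c \<in> U"
    using x by (simp_all add: a_def c_def alpha_in_U)
  have "conjset U (hh U ioo \<tau> x) = conjset U (a \<circ> (\<mu> x \<circ> (\<tau> \<circ> inv c)))"
    by (simp add: hh_eq_mu[OF x] a_def c_def comp_assoc)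
  also have "\<dots> = conjset (conjset (conjset (conjset U (inv c)) \<tau>) (\<mu> x)) a"
    using U_bij[OF a] U_bij[OF c] mu_bij[OF x] tau_bij
    by (simp add: conjset_conjset bij_comp bij_imp_bij_inv)
  also have "conjset U (inv c) = U"
    by (rule subgroup_conjset_self[OF subgroup_U U_inv[OF c]])
  finally show ?thesis
    by (simp add: subgroup_conjset_eq_self_iff[OF subgroup_U a])
qed

lemma conjset_U0_mu_eq_U_iff:
  "isunit x \<Longrightarrow> conjset U0 (\<mu> x) = U \<longleftrightarrow> U0 = conjset U (\<mu> (opp x))"
  by (simp add: conjset_eq_iff_conjset_inv mu_bij mu_opp)

lemma hh_condition_iff_mu_condition:
  "(\<forall>x. isunit x \<longrightarrow> conjset U (hh U ioo \<tau> x) = U) \<longleftrightarrow> (\<forall>x. isunit x \<longrightarrow> U0 = conjset U (\<mu> x))"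
proof -
  have "(\<forall>x. isunit x \<longrightarrow> U0 = conjset U (\<mu> (opp x))) \<longleftrightarrow> (\<forall>x. isunit x \<longrightarrow> U0 = conjset U (\<mu> x))"
    by (metis isunit_opp isunit_not_inf opp_opp)
  then show ?thesis
    by (simp add: conjset_hh_eq_U_iff conjset_U0_mu_eq_U_iff)
qed

section \<open>Permutations respecting the root groups\<close>

definition respects_root_group_at :: "('a \<Rightarrow> 'a) \<Rightarrow> 'a \<Rightarrow> bool" where
  "respects_root_group_at g x \<longleftrightarrow> conjset (Ux x) g = Ux (g x)"

lemma respects_root_group_at_comp:
  "bij g \<Longrightarrow> bij h \<Longrightarrow> respects_root_group_at g x \<Longrightarrow> respects_root_group_at h (g x) \<Longrightarrow>
    respects_root_group_at (h \<circ> g) x"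
  by (simp add: respects_root_group_at_def conjset_conjset[symmetric])

lemma respects_root_group_at_inv:
  "bij g \<Longrightarrow> respects_root_group_at g (inv g x) \<Longrightarrow> respects_root_group_at (inv g) x"
  by (metis respects_root_group_at_def conjset_conjset_inv bij_apply_inv)

definition root_automorphism :: "('a \<Rightarrow> 'a) \<Rightarrow> bool" where
  "root_automorphism g \<longleftrightarrow> g \<in> symeq R \<and> (\<forall>x. respects_root_group_at g x)"

lemma root_automorphism_comp:
  "root_automorphism g \<Longrightarrow> root_automorphism h \<Longrightarrow> root_automorphism (h \<circ> g)"
  unfolding root_automorphism_def
  using respects_root_group_at_comp symeq_comp symeq_bij by metis

lemma root_automorphism_inv: "root_automorphism g \<Longrightarrow> root_automorphism (inv g)"
  unfolding root_automorphism_def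
  using respects_root_group_at_inv symeq_inv symeq_bij by metis

lemma U_respects_root_group_at:
  assumes u: "u \<in> U" and x: "\<not> R x ioo"
  shows "respects_root_group_at u x"
proof -
  have ux: "\<not> R (u x) ioo"
    using U_rel_inf_iff[OF u] x by simp
  have "u \<circ> \<alpha> x = \<alpha> (u x)"
    using alpha_apply_zero[OF U_comp[OF alpha_in_U[OF x] u]] x by simp
  then show ?thesis
    using x ux U_bij[OF u] alpha_bij[OF x]
    by (simp add: respects_root_group_at_def MU_def conjset_conjset)
qed

lemma exists_unit: "\<exists>y. isunit y"
proof (rule ccontr)
  assume "\<nexists>y. isunit y"
  then have "R y zero_pt \<or> R y ioo" for y
    using isunitI by blast
  then have "classes R \<subseteq> {cls R zero_pt, cls R ioo}"
    unfolding classes_def using cls_eq_iff[OF equivp] by auto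
  moreover have "card {cls R zero_pt, cls R ioo} \<le> 2"
    by (simp add: card_insert_if)
  ultimately have "finite (classes R)" "card (classes R) \<le> 2"
    using finite_subset[of "classes R"] card_mono[of "{cls R zero_pt, cls R ioo}" "classes R"]
    by auto
  then show False
    using more_than_two by (simp add: more_than_two_classes_def)
qed

end

section \<open>Condition (iii) implies (LM2)\<close>

locale mu_condition = moufang_construction +
  assumes U0_eq_conjset_mu: "isunit x \<Longrightarrow> U0 = conjset U (\<mu> x)"
begin

lemma conjset_U0_mu: "isunit x \<Longrightarrow> conjset U0 (\<mu> x) = U"
  using U0_eq_conjset_mu[of "opp x"] conjset_U0_mu_eq_U_iff by simp

text \<open>On units the two definitions of the root groups agree.\<close>

lemma conjset_U0_alpha_unit:
  assumes y: "isunit y"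
  shows "conjset U0 (\<alpha> y) = conjset U (\<gamma> (inv \<tau> y))"
proof -
  define x where "x = opp y"
  have x: "isunit x" and opp_x: "opp x = y"
    using y by (simp_all add: x_def)
  have "conjset (conjset (conjset U (\<gamma> (inv \<tau> y))) (\<alpha> x)) (\<gamma> (opp (inv \<tau> x))) = U0"
    using U0_eq_conjset_mu[OF x] x y opp_x
    by (simp add: mu_eq conjset_conjset gamma_bij alpha_bij bij_comp comp_assoc)
  then have "conjset (conjset U (\<gamma> (inv \<tau> y))) (\<alpha> x) = U0"
    using x by (simp add: subgroup_conjset_eq_self_iff[OF subgroup_U0 gamma_in_U0])
  then show ?thesis
    using x opp_x by (simp add: conjset_eq_iff_conjset_inv alpha_bij alpha_opp[symmetric])
qed

lemma Ux_eq_conjset_gamma: "\<not> R x zero_pt \<Longrightarrow> Ux x = conjset U (\<gamma> (inv \<tau> x))"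
  using conjset_U0_alpha_unit[OF isunitI] by (cases "R x ioo") (simp_all add: MU_def)

lemma U0_respects_root_group_at:
  assumes v: "v \<in> U0" and x: "\<not> R x zero_pt"
  shows "respects_root_group_at v x"
proof -
  have a: "\<not> R (inv \<tau> x) ioo"
    using x by simp
  have "v \<circ> \<gamma> (inv \<tau> x) = \<gamma> (inv \<tau> (v x))"
    using U0_eq_gamma[OF U0_comp[OF gamma_in_U0[OF a] v]] a tau_bij by simp
  then show ?thesis
    using x U0_rel_zero_iff[OF v] U0_bij[OF v] gamma_bij[OF a]
    by (simp add: respects_root_group_at_def Ux_eq_conjset_gamma conjset_conjset)
qed

lemma swap_respects_root_group_at:
  assumes k: "k \<in> symeq R" and k_zero: "k zero_pt = ioo" and k_inf: "k ioo = zero_pt"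
    and kU: "conjset U k = U0" and kU0: "conjset U0 k = U"
  shows "respects_root_group_at k x"
proof -
  have bk: "bij k"
    using symeq_bij[OF k] .
  have inv_k_inf: "inv k ioo = zero_pt" and inv_k_zero: "inv k zero_pt = ioo"
    using bk k_zero k_inf by (metis bij_inv_apply)+
  show ?thesis
  proof (cases "R x ioo")
    case False
    define w where "w = k \<circ> \<alpha> x \<circ> inv k"
    have w: "w \<in> U0"
      using kU alpha_in_U[OF False] by (auto simp: w_def conjset_image)
    have kx: "\<not> R (k x) zero_pt"
      using symeq_rel_iff[OF k, of x ioo] k_inf False by simp
    have "conjset (Ux x) k = conjset U w"
      using False bk alpha_bij[OF False] kU0
      by (simp add: MU_def conjset_conjset_commute w_def)
    also have "w = \<gamma> (inv \<tau> (k x))"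
      using U0_eq_gamma[OF w] False inv_k_inf by (simp add: w_def)
    finally show ?thesis
      using kx by (simp add: respects_root_group_at_def Ux_eq_conjset_gamma)
  next
    case True
    have a: "\<not> R (inv \<tau> x) ioo"
      using True inf_class_not_zero by simp
    define w where "w = k \<circ> \<gamma> (inv \<tau> x) \<circ> inv k"
    have w: "w \<in> U"
      using kU0 gamma_in_U0[OF a] by (auto simp: w_def conjset_image)
    have kx: "\<not> R (k x) ioo"
      using symeq_rel_iff[OF k, of x zero_pt] k_zero True inf_class_not_zero by simp
    have "conjset (Ux x) k = conjset U0 w"
      using True bk gamma_bij[OF a] kU
      by (simp add: MU_def conjset_conjset_commute w_def)
    also have "w = \<alpha> (k x)"
      using alpha_apply_zero[OF w] a inv_k_zero tau_bij by (simp add: w_def)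
    finally show ?thesis
      using kx by (simp add: respects_root_group_at_def MU_def)
  qed
qed

lemma mu_respects_root_group_at: "isunit y \<Longrightarrow> respects_root_group_at (\<mu> y) x"
  using U0_eq_conjset_mu conjset_U0_mu
  by (intro swap_respects_root_group_at mu_symeq) simp_all

text \<open>An element \<open>\<gamma>\<^sub>c\<close> of \<open>U\<^sub>0\<close> with \<open>c\<close> a unit is \<open>\<alpha>\<^sub>y\<^sup>-\<^sup>1 \<gamma>\<^sub>b\<^sup>-\<^sup>1 \<mu>\<^sub>y\<close> for
  \<open>y = -(c\<tau>)\<close> and \<open>b = -(y\<tau>\<^sup>-\<^sup>1)\<close>; each factor respects the root group at the point
  it is applied to.\<close>

lemma U0_respects_root_group_at_of_unit:
  assumes v: "v \<in> U0" and unit: "isunit (v ioo)"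
  shows "respects_root_group_at v x"
proof (cases "R x zero_pt")
  case False
  then show ?thesis
    using U0_respects_root_group_at[OF v] by simp
next
  case True
  define c where "c = inv \<tau> (v ioo)"
  define y where "y = opp (\<tau> c)"
  define b where "b = opp (inv \<tau> y)"
  have c: "isunit c" and y: "isunit y" and b: "\<not> R b ioo"
    using unit by (simp_all add: c_def y_def b_def)
  have "inv \<tau> (opp y) = c"
    using c tau_bij by (simp add: y_def)
  then have v_eq: "v = inv (\<alpha> y) \<circ> (inv (\<gamma> b) \<circ> \<mu> y)"
    using U0_eq_gamma[OF v] y b gamma_bij[OF b] alpha_bij
    by (simp add: mu_eq b_def c_def comp_assoc)
  have mu_x: "R (\<mu> y x) ioo"
    using symeq_rel_iff[OF mu_symeq[OF y], of x zero_pt] True y by simp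
  have "opp b = inv \<tau> y"
    using y by (simp add: b_def)
  then have "inv (\<gamma> b) ioo = y"
    using y tau_bij by (simp add: gamma_opp[OF b])
  then have "R (inv (\<gamma> b) (\<mu> y x)) y"
    using symeq_rel_iff[OF symeq_inv[OF gamma_symeq[OF b]], of "\<mu> y x" ioo] mu_x by simp
  then have p: "\<not> R (inv (\<gamma> b) (\<mu> y x)) ioo"
    using R_cong_left isunit_not_inf[OF y] by blast
  have "\<not> R (\<mu> y x) zero_pt"
    using inf_class_not_zero[OF mu_x] .
  then have "respects_root_group_at (inv (\<gamma> b) \<circ> \<mu> y) x"
    using mu_bij[OF y] gamma_bij[OF b] mu_respects_root_group_at[OF y]
      U0_respects_root_group_at[OF U0_inv[OF gamma_in_U0[OF b]]]
    by (intro respects_root_group_at_comp) (simp_all add: bij_imp_bij_inv)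
  then show ?thesis
    using v_eq p mu_bij[OF y] gamma_bij[OF b] alpha_bij[OF isunit_not_inf[OF y]]
      U_respects_root_group_at[OF U_inv[OF alpha_in_U[OF isunit_not_inf[OF y]]]]
    by (metis respects_root_group_at_comp bij_comp bij_imp_bij_inv comp_apply)
qed

lemma U0_root_automorphism: "v \<in> U0 \<Longrightarrow> root_automorphism v"
proof -
  assume v: "v \<in> U0"
  have "respects_root_group_at v x" for x
  proof (cases "isunit (v ioo)")
    case True
    then show ?thesis
      using U0_respects_root_group_at_of_unit[OF v] by simp
  next
    case False
    then have v_inf: "R (v ioo) ioo"
      using isunitI U0_rel_zero_iff[OF v] inf_not_zero by blast
    obtain y where y: "isunit y"
      using exists_unit by blast
    define b where "b = \<gamma> (inv \<tau> y)"
    have b: "b \<in> U0" and b_inf: "b ioo = y"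
      using y tau_bij by (simp_all add: b_def gamma_in_U0)
    have "inv b ioo = \<tau> (opp (inv \<tau> y))"
      using y by (simp add: b_def gamma_opp)
    then have inv_b: "respects_root_group_at (inv b) x"
      using y U0_respects_root_group_at_of_unit[OF U0_inv[OF b]] by simp
    have "isunit (v y)"
    proof (rule isunitI)
      show "\<not> R (v y) zero_pt"
        using y U0_rel_zero_iff[OF v] by simp
      have "R (v y) ioo \<longleftrightarrow> R (v y) (v ioo)"
        using v_inf R_sym R_trans by blast
      then show "\<not> R (v y) ioo"
        using y symeq_rel_iff[OF U0_symeq[OF v]] by simp
    qed
    then have v_b: "respects_root_group_at (v \<circ> b) (inv b x)"
      using b_inf U0_respects_root_group_at_of_unit[OF U0_comp[OF b v]] by simp
    have "respects_root_group_at (v \<circ> b \<circ> inv b) x"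
      by (rule respects_root_group_at_comp[OF U0_bij[OF U0_inv[OF b]] U0_bij[OF U0_comp[OF b v]]
            inv_b v_b])
    then show ?thesis
      using U0_bij[OF b] by (simp add: comp_assoc)
  qed
  then show ?thesis
    using U0_symeq[OF v] by (simp add: root_automorphism_def)
qed

lemma mu_root_automorphism: "isunit y \<Longrightarrow> root_automorphism (\<mu> y)"
  using mu_symeq mu_respects_root_group_at by (simp add: root_automorphism_def)

lemma U_root_automorphism: "u \<in> U \<Longrightarrow> root_automorphism u"
proof -
  assume u: "u \<in> U"
  obtain y where y: "isunit y"
    using exists_unit by blast
  then obtain v where "v \<in> U0" "u = \<mu> y \<circ> v \<circ> inv (\<mu> y)"
    using u conjset_U0_mu[OF y] by (auto simp: conjset_image)
  then show ?thesis
    using U0_root_automorphism mu_root_automorphism[OF y]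
    by (metis root_automorphism_comp root_automorphism_inv)
qed

lemma gen_root_automorphism: "g \<in> gen (\<Union>y. Ux y) \<Longrightarrow> root_automorphism g"
proof (induction rule: gen.induct)
  case (gen_base g)
  then obtain y where g: "g \<in> Ux y"
    by blast
  show ?case
  proof (cases "R y ioo")
    case True
    then have a: "\<not> R (inv \<tau> y) ioo"
      using inf_class_not_zero by simp
    obtain u where "u \<in> U" "g = \<gamma> (inv \<tau> y) \<circ> u \<circ> inv (\<gamma> (inv \<tau> y))"
      using g True by (auto simp: MU_def conjset_image)
    then show ?thesis
      using U_root_automorphism U0_root_automorphism[OF gamma_in_U0[OF a]]
      by (metis root_automorphism_comp root_automorphism_inv)
  next
    case False
    obtain v where "v \<in> U0" "g = \<alpha> y \<circ> v \<circ> inv (\<alpha> y)"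
      using g False by (auto simp: MU_def conjset_image[of U0])
    then show ?thesis
      using U0_root_automorphism U_root_automorphism[OF alpha_in_U[OF False]]
      by (metis root_automorphism_comp root_automorphism_inv)
  qed
next
  case gen_id
  show ?case
    unfolding root_automorphism_def respects_root_group_at_def
    by (simp only: symeq_id conjset_id id_apply simp_thms)
next
  case (gen_comp g h)
  then show ?case
    using root_automorphism_comp[of g h] by (simp add: comp_def)
next
  case (gen_inv g)
  then show ?case
    by (simp add: root_automorphism_inv)
qed

lemma LM2: "LM2 R Ux"
  using gen_root_automorphism
  by (simp add: LM2_def root_automorphism_def respects_root_group_at_def)

end

context moufang_construction
begin

lemma LM2_imp_mu_condition:
  assumes LM2: "LM2 R Ux" and x: "isunit x"
  shows "U0 = conjset U (\<mu> x)"
proof -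
  have "\<gamma> a \<in> gen (\<Union>y. Ux y)" if "\<not> R a ioo" for a
    using gamma_in_U0[OF that] by (metis Ux_zero UN_I UNIV_I gen_base)
  moreover have "\<alpha> x \<in> gen (\<Union>y. Ux y)"
    using alpha_in_U[OF isunit_not_inf[OF x]] by (metis Ux_inf UN_I UNIV_I gen_base)
  ultimately have "\<mu> x \<in> gen (\<Union>y. Ux y)"
    unfolding mu_eq using x by (intro gen_comp) simp_all
  then have "conjset (Ux ioo) (\<mu> x) = Ux (\<mu> x ioo)"
    using LM2 by (simp add: LM2_def)
  then show ?thesis
    using x by (simp add: Ux_inf Ux_zero)
qed

lemma local_moufang_iff_mu_condition:
  "local_moufang R Ux \<longleftrightarrow> (\<forall>x. isunit x \<longrightarrow> U0 = conjset U (\<mu> x))"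
proof
  assume "local_moufang R Ux"
  then show "\<forall>x. isunit x \<longrightarrow> U0 = conjset U (\<mu> x)"
    using LM2_imp_mu_condition by (simp add: local_moufang_def)
next
  assume "\<forall>x. isunit x \<longrightarrow> U0 = conjset U (\<mu> x)"
  then interpret mu_condition R U ioo \<tau>
    by unfold_locales simp
  show "local_moufang R Ux"
    unfolding local_moufang_def
    using equivp more_than_two subgroup_Ux LM0 LM1 LM1' LM2 by blast
qed

end

theorem mainTheorem7:
  fixes R :: "'a \<Rightarrow> 'a \<Rightarrow> bool" and U :: "('a \<Rightarrow> 'a) set"
    and ioo :: 'a and \<tau> :: "'a \<Rightarrow> 'a"
  assumes "construction_data R U ioo \<tau>"
  shows "LM0 R (MU R U ioo \<tau>) \<and> LM1 R (MU R U ioo \<tau>) \<and> LM1' R (MU R U ioo \<tau>) \<and>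
    (local_moufang R (MU R U ioo \<tau>) \<longleftrightarrow>
       (\<forall>x. is_unit R ioo \<tau> x \<longrightarrow> conjset U (hh U ioo \<tau> x) = U)) \<and>
    ((\<forall>x. is_unit R ioo \<tau> x \<longrightarrow> conjset U (hh U ioo \<tau> x) = U) \<longleftrightarrow>
       (\<forall>x. is_unit R ioo \<tau> x \<longrightarrow> conjset U \<tau> = conjset U (mu U ioo \<tau> x)))"
proof -
  interpret moufang_construction R U ioo \<tau>
    by (rule moufang_construction.intro) (rule assms)
  show ?thesis
    using LM0 LM1 LM1' local_moufang_iff_mu_condition hh_condition_iff_mu_condition by simp
qed

end
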